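(* Assume the setting below, and assume additionally that there is a constant $\Lambda\ge0$ with $\overline{L}^{(m)}_n\le\Lambda$ for all $m\ge m_0$, all $n\ge0$ and all initial values $x_0\in D$. Then for every $p\in\mathbb{Z}$ there exist constants $C_1,C_2\ge0$ (depending only on $D$, $K$, $m_0$, $\Lambda$ and $p$) such that $m_{min}(x_0,N,p)$ is finite and $$m_{min}(x_0,N,p)\le C_1N+C_2$$ for all $N\in\mathbb{N}$ and all $x_0\in D$.
   Context: Setting. $D\subset\mathbb{R}$ is a compact interval with $0\notin D$, and $f:D\to D$ is continuous on $D$, continuously differentiable on $\operatorname{int}D$, with $f'$ bounded on $\operatorname{int}D$. Fix $K>0$ and an integer $m_0\ge1$ with $K2^{-m_0}<1$, and put $\delta_m:=\frac{K2^{-m}}{1-K2^{-m}}$ for integers $m\ge m_0$. For an initial value $x_0\in D$ let $x_n:=f^n(x_0)$. For each integer $m\ge m_0$ (the mantissa length) a computed orbit is given: sequences $(\hat{x}^{(m)}_n)_{n\ge0}\subset D$, $(\overline{e}^{(m)}_n)_{n\ge0}$ and numbers $\overline{L}^{(m)}_n\ge0$ with $\overline{e}^{(m)}_0=\delta_m|\hat{x}^{(m)}_0|$ and $\overline{e}^{(m)}_{n+1}=\overline{L}^{(m)}_n\overline{e}^{(m)}_n+\delta_m|\hat{x}^{(m)}_{n+1}|$. For $N\in\mathbb{N}$ and $p\in\mathbb{Z}$, the minimal mantissa length $m_{min}(x_0,N,p)$ is the least integer $m\ge m_0$ such that $\overline{e}^{(m)}_n\le\frac{10^{-p}}{1+10^{-p}}|\hat{x}^{(m)}_n|$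 for all $n=0,\dots,N$. The loss of significance rate is $\sigma(x_0,p):=\limsup_{N\to\infty}m_{min}(x_0,N,p)/N$. *)

theory Defs
  imports "HOL-Analysis.Analysis"
begin

definition delta :: "real \<Rightarrow> nat \<Rightarrow> real" where
  "delta K m = (K * 2 powr (- real m)) / (1 - K * 2 powr (- real m))"

text \<open>Computed orbits are indexed as xhat x0 m n, ebar x0 m n, Lbar x0 m n
  (initial value x0, mantissa length m, step n).
  Accuracy requirement up to step N with p decimal digits for mantissa length m.\<close>
definition accurate ::
  "(real \<Rightarrow> nat \<Rightarrow> nat \<Rightarrow> real) \<Rightarrow> (real \<Rightarrow> nat \<Rightarrow> nat \<Rightarrow> real)
   \<Rightarrow> real \<Rightarrow> nat \<Rightarrow> int \<Rightarrow> nat \<Rightarrow> bool" where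
  "accurate xhat ebar x0 N p m \<longleftrightarrow>
     (\<forall>n\<le>N. ebar x0 m n \<le> (10 powr (- real_of_int p) / (1 + 10 powr (- real_of_int p))) * \<bar>xhat x0 m n\<bar>)"

definition m_min ::
  "nat \<Rightarrow> (real \<Rightarrow> nat \<Rightarrow> nat \<Rightarrow> real) \<Rightarrow> (real \<Rightarrow> nat \<Rightarrow> nat \<Rightarrow> real)
   \<Rightarrow> real \<Rightarrow> nat \<Rightarrow> int \<Rightarrow> nat" where
  "m_min m0 xhat ebar x0 N p = (LEAST m. m0 \<le> m \<and> accurate xhat ebar x0 N p m)"

end

theory Submission
  imports Defs
begin

(* The error recurrence e(n+1) = L_n e_n + delta_m |x_{n+1}| with
   0 \<le> L_n \<le> \<Lambda> and c \<le> |x_n| \<le> B on D gives e_n \<le> delta_m B (n+1) max(1,\<Lambda>)^n,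
   while delta_m \<le> 2K 2^-m once K 2^-m \<le> 1/2.  Choosing k with max(1,\<Lambda>) \<le> 2^k
   bounds (n+1) max(1,\<Lambda>)^n by 2^(N(k+1)) for n \<le> N, so the error is at most
   q c \<le> q |x_n| (q the relative accuracy 10^-p/(1+10^-p)) as soon as
   m \<ge> m0 + 1 + j + N(k+1), where 2^j absorbs the constant 2KB/(qc).
   Hence m_min \<le> (k+1) N + (m0+1+j), a bound uniform in the map, the orbit
   and the initial value. *)

text \<open>The rounding-error constant is small once one more bit than m0 is available:
  then K 2^-m \<le> 1/2, so delta K m \<le> 2 K 2^-m.\<close>
lemma delta_bound:
  assumes K: "K > 0" and Km0: "K * 2 powr (- real m0) < 1" and m: "Suc m0 \<le> m"
  shows "0 \<le> delta K m" and "delta K m \<le> 2 * K / 2 ^ m"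
proof -
  have pow: "\<And>n::nat. 2 powr (- real n) = 1 / 2 ^ n"
    by (simp add: powr_minus powr_realpow divide_inverse)
  have "(2::real) ^ Suc m0 \<le> 2 ^ m" using m by (intro power_increasing) auto
  hence "K / 2 ^ m \<le> (K / 2 ^ m0) / 2" using K by (simp add: frac_le)
  also have "\<dots> < 1/2" using Km0 pow by simp
  finally have small: "K / 2 ^ m < 1/2" .
  have d: "delta K m = (K / 2^m) / (1 - K / 2^m)" unfolding delta_def pow by simp
  have "K / 2 ^ m > 0" using K by simp
  then show "0 \<le> delta K m" and "delta K m \<le> 2 * K / 2 ^ m"
    unfolding d using small by (auto simp: field_simps)
qed

lemma error_recurrence_bound:
  fixes e x l :: "nat \<Rightarrow> real"
  assumes e0: "e 0 = d * \<bar>x 0\<bar>"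
    and eS: "\<And>n. e (Suc n) = l n * e n + d * \<bar>x (Suc n)\<bar>"
    and l: "\<And>n. 0 \<le> l n \<and> l n \<le> \<Lambda>"
    and xB: "\<And>n. \<bar>x n\<bar> \<le> B"
    and d: "d \<ge> 0"
  shows "e n \<le> d * B * (real n + 1) * (max 1 \<Lambda>) ^ n"
proof (induction n)
  case 0
  then show ?case using e0 xB[of 0] d by (simp add: mult_left_mono)
next
  case (Suc n)
  define L where "L = max 1 \<Lambda>"
  have L1: "L \<ge> 1" and LL: "\<Lambda> \<le> L" unfolding L_def by auto
  have B0: "B \<ge> 0" using xB[of 0] by linarith
  define bd where "bd = d * B * (real n + 1) * L ^ n"
  have bd0: "bd \<ge> 0" unfolding bd_def using d B0 L1 by simp
  have "l n * e n \<le> l n * bd"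
    using Suc l[of n] unfolding bd_def L_def by (simp add: mult_left_mono)
  also have "\<dots> \<le> L * bd" using l[of n] LL bd0 by (intro mult_right_mono) auto
  finally have propagated: "l n * e n \<le> L * bd" .
  have "d * \<bar>x (Suc n)\<bar> \<le> d * B" using xB d by (simp add: mult_left_mono)
  also have "\<dots> \<le> d * B * L ^ Suc n"
    using d B0 one_le_power[OF L1, of "Suc n"] mult_left_mono[of 1 "L ^ Suc n" "d * B"]
    by simp
  finally have fresh: "d * \<bar>x (Suc n)\<bar> \<le> d * B * L ^ Suc n" .
  have "e (Suc n) \<le> L * bd + d * B * L ^ Suc n" using eS propagated fresh by simp
  also have "\<dots> = d * B * (real (Suc n) + 1) * L ^ Suc n"
    unfolding bd_def by (simp add: algebra_simps)
  finally show ?case unfolding L_def .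
qed

text \<open>A compact interval avoiding 0 is bounded away from 0 and from infinity in
  absolute value; this turns the absolute error bound into a relative one.\<close>
lemma interval_abs_bounds:
  assumes "a \<le> b" and "0 \<notin> {a..b::real}"
  obtains c B where "c > 0" and "\<And>x. x \<in> {a..b} \<Longrightarrow> c \<le> \<bar>x\<bar> \<and> \<bar>x\<bar> \<le> B"
proof (cases "0 < a")
  case True
  show ?thesis by (rule that[of a b]) (use True in auto)
next
  case False
  hence "b < 0" using assms by force
  show ?thesis by (rule that[of "-b" "-a"]) (use \<open>b < 0\<close> in auto)
qed

lemma growth_le_power_of_two:
  fixes L :: real
  assumes L1: "1 \<le> L" and k: "L \<le> 2 ^ k" and nN: "n \<le> N"
  shows "(real n + 1) * L ^ n \<le> 2 ^ (N * (k + 1))"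
proof -
  have "N + 1 \<le> 2 ^ N" by (induction N) auto
  then have "real (N + 1) \<le> real (2 ^ N)" by (rule of_nat_mono)
  then have "real N + 1 \<le> 2 ^ N" by simp
  then have "real n + 1 \<le> 2 ^ N" using nN by linarith
  moreover have "L ^ n \<le> (2 ^ k) ^ N"
  proof -
    have "L ^ n \<le> L ^ N" using nN L1 by (rule power_increasing)
    also have "\<dots> \<le> (2 ^ k) ^ N" using L1 k by (intro power_mono) auto
    finally show ?thesis .
  qed
  ultimately have "(real n + 1) * L ^ n \<le> 2 ^ N * (2 ^ k) ^ N"
    using L1 by (intro mult_mono) auto
  also have "\<dots> = 2 ^ (N * (k + 1))"
    by (simp add: power_mult[symmetric] power_add[symmetric] algebra_simps)
  finally show ?thesis .
qed

lemma orbit_accurate_for_large_mantissa: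
  fixes e x l :: "nat \<Rightarrow> real"
  assumes e0: "e 0 = delta K m * \<bar>x 0\<bar>"
    and eS: "\<And>n. e (Suc n) = l n * e n + delta K m * \<bar>x (Suc n)\<bar>"
    and l: "\<And>n. 0 \<le> l n \<and> l n \<le> \<Lambda>"
    and xcB: "\<And>n. c \<le> \<bar>x n\<bar> \<and> \<bar>x n\<bar> \<le> B"
    and c: "c > 0" and q: "q > 0"
    and K: "K > 0" and Km0: "K * 2 powr (- real m0) < 1"
    and k: "max 1 \<Lambda> \<le> 2 ^ k" and j: "2 * K * B / (q * c) \<le> 2 ^ j"
    and m: "Suc m0 \<le> m" "j + N * (k + 1) \<le> m"
    and nN: "n \<le> N"
  shows "e n \<le> q * \<bar>x n\<bar>"
proof -
  note d = delta_bound[OF K Km0 m(1)]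
  have B0: "B \<ge> 0" using xcB[of 0] c by linarith
  have "(2::real) ^ (j + N * (k + 1)) \<le> 2 ^ m" using m(2) by (intro power_increasing) auto
  hence scale: "2 ^ j * 2 ^ (N * (k + 1)) / 2 ^ m \<le> (1::real)" by (simp add: power_add)
  have "e n \<le> delta K m * B * ((real n + 1) * (max 1 \<Lambda>) ^ n)"
    using error_recurrence_bound[OF e0 eS l _ d(1)] xcB by (simp add: mult.assoc)
  also have "\<dots> \<le> delta K m * B * 2 ^ (N * (k + 1))"
    using growth_le_power_of_two[OF _ k nN] d(1) B0 by (intro mult_left_mono) auto
  also have "\<dots> \<le> 2 * K / 2 ^ m * B * 2 ^ (N * (k + 1))"
    using d(2) B0 by (intro mult_right_mono) auto
  also have "\<dots> = (2 * K * B / (q * c)) * (q * c) * 2 ^ (N * (k + 1)) / 2 ^ m"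
    using q c by simp
  also have "\<dots> \<le> 2 ^ j * (q * c) * 2 ^ (N * (k + 1)) / 2 ^ m"
    using j q c by (intro divide_right_mono mult_right_mono) auto
  also have "\<dots> = (q * c) * (2 ^ j * 2 ^ (N * (k + 1)) / 2 ^ m)" by simp
  also have "\<dots> \<le> q * c" by (rule mult_left_le[OF scale]) (use q c in simp)
  also have "\<dots> \<le> q * \<bar>x n\<bar>" using xcB q by simp
  finally show ?thesis .
qed

lemma m_min_le:
  assumes "m0 \<le> m" and "accurate xhat ebar x0 N p m"
  shows "m_min m0 xhat ebar x0 N p \<le> m"
  unfolding m_min_def using assms by (intro Least_le) auto

theorem mainTheorem5:
  fixes D :: "real set" and K :: real and m0 :: nat and \<Lambda> :: real and p :: int
  assumes D_int: "\<exists>a b. a \<le> b \<and> D = {a..b}"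
    and D_zero: "0 \<notin> D"
    and K_pos: "K > 0"
    and m0_ge: "m0 \<ge> 1"
    and K_m0: "K * 2 powr (- real m0) < 1"
    and Lam: "\<Lambda> \<ge> 0"
  shows "\<exists>C1 C2::real. C1 \<ge> 0 \<and> C2 \<ge> 0 \<and>
    (\<forall>(f::real \<Rightarrow> real) (f'::real \<Rightarrow> real)
       (xhat::real \<Rightarrow> nat \<Rightarrow> nat \<Rightarrow> real) (ebar::real \<Rightarrow> nat \<Rightarrow> nat \<Rightarrow> real)
       (Lbar::real \<Rightarrow> nat \<Rightarrow> nat \<Rightarrow> real).
      continuous_on D f \<and> f ` D \<subseteq> D \<and>
      (\<forall>x\<in>interior D. (f has_real_derivative f' x) (at x)) \<and>
      continuous_on (interior D) f' \<and>
      (\<exists>M. \<forall>x\<in>interior D. \<bar>f' x\<bar> \<le> M) \<and>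
      (\<forall>x0\<in>D. \<forall>m\<ge>m0. \<forall>n.
         xhat x0 m n \<in> D \<and> 0 \<le> Lbar x0 m n \<and> Lbar x0 m n \<le> \<Lambda> \<and>
         ebar x0 m 0 = delta K m * \<bar>xhat x0 m 0\<bar> \<and>
         ebar x0 m (Suc n) = Lbar x0 m n * ebar x0 m n + delta K m * \<bar>xhat x0 m (Suc n)\<bar>)
      \<longrightarrow> (\<forall>N::nat. \<forall>x0\<in>D.
            (\<exists>m\<ge>m0. accurate xhat ebar x0 N p m) \<and>
            real (m_min m0 xhat ebar x0 N p) \<le> C1 * real N + C2))"
proof -
  obtain a b where ab: "a \<le> b" "D = {a..b}" using D_int by blast
  obtain c B where c: "c > 0" and xcB: "\<And>x. x \<in> D \<Longrightarrow> c \<le> \<bar>x\<bar> \<and> \<bar>x\<bar> \<le> B"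
    using interval_abs_bounds[of a b] ab D_zero by blast
  define q where "q = 10 powr (- real_of_int p) / (1 + 10 powr (- real_of_int p))"
  have q: "q > 0" unfolding q_def by (simp add: add_pos_pos)
  obtain k :: nat where k: "max 1 \<Lambda> \<le> 2 ^ k"
    using real_arch_pow[of 2 "max 1 \<Lambda>"] by (auto intro: less_imp_le)
  obtain j :: nat where j: "2 * K * B / (q * c) \<le> 2 ^ j"
    using real_arch_pow[of 2 "2 * K * B / (q * c)"] by (auto intro: less_imp_le)
  show ?thesis
  proof (rule exI[of _ "real (k + 1)"], rule exI[of _ "real (Suc m0 + j)"],
      intro conjI allI impI ballI)
    fix f f' :: "real \<Rightarrow> real" and xhat ebar Lbar N x0
    assume "continuous_on D f \<and> f ` D \<subseteq> D \<and>
      (\<forall>x\<in>interior D. (f has_real_derivative f' x) (at x)) \<and>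
      continuous_on (interior D) f' \<and> (\<exists>M. \<forall>x\<in>interior D. \<bar>f' x\<bar> \<le> M) \<and>
      (\<forall>x0\<in>D. \<forall>m\<ge>m0. \<forall>n.
         xhat x0 m n \<in> D \<and> 0 \<le> Lbar x0 m n \<and> Lbar x0 m n \<le> \<Lambda> \<and>
         ebar x0 m 0 = delta K m * \<bar>xhat x0 m 0\<bar> \<and>
         ebar x0 m (Suc n) = Lbar x0 m n * ebar x0 m n + delta K m * \<bar>xhat x0 m (Suc n)\<bar>)"
      and x0: "x0 \<in> D"
    then have orbit: "\<And>m n. m0 \<le> m \<Longrightarrow> xhat x0 m n \<in> D \<and> 0 \<le> Lbar x0 m n \<and>
         Lbar x0 m n \<le> \<Lambda> \<and> ebar x0 m 0 = delta K m * \<bar>xhat x0 m 0\<bar> \<and>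
         ebar x0 m (Suc n) = Lbar x0 m n * ebar x0 m n + delta K m * \<bar>xhat x0 m (Suc n)\<bar>"
      by blast
    define m where "m = Suc m0 + j + N * (k + 1)"
    have mm0: "m0 \<le> m" unfolding m_def by simp
    have acc: "accurate xhat ebar x0 N p m"
      unfolding accurate_def q_def[symmetric]
    proof (intro allI impI)
      fix n assume "n \<le> N"
      then show "ebar x0 m n \<le> q * \<bar>xhat x0 m n\<bar>"
        using orbit[OF mm0] xcB
        by (intro orbit_accurate_for_large_mantissa[OF _ _ _ _ c q K_pos K_m0 k j])
          (auto simp: m_def)
    qed
    show "\<exists>m\<ge>m0. accurate xhat ebar x0 N p m" using acc mm0 by blast
    have "real (m_min m0 xhat ebar x0 N p) \<le> real m"
      using m_min_le[OF mm0 acc] by simp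
    then show "real (m_min m0 xhat ebar x0 N p) \<le> real (k + 1) * real N + real (Suc m0 + j)"
      unfolding m_def by (simp add: algebra_simps)
  qed auto
qed

end
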